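(* For every $w\in F$, the edge $e_0(w)$ is a good edge.
   Context: $F$ is Thompson's group with generators $x_0,x_1$ and $X^1$ its Cayley graph with respect to $\{x_0^{\pm1},x_1^{\pm1}\}$. Elements are represented by reduced tree pair diagrams $(T_-(w),T_+(w))$ of finite rooted binary trees with equally many carets (caret: vertex with its two downward edges), carets numbered in infix order from 1. A caret is a right (left) caret if one of its edges lies on the right (left) side of the tree; the root is both; others are interior. Nested traversal word $\gamma(T)$: go through carets of $T$ in infix order, skipping carets in the right subtree of a caret to which rule (3) or (5) has been applied, appending (1) nothing for caret 1; (2) $x_0^{-1}$ for a left caret numbered $>1$; (3) $x_0^{-1}\gamma(T')x_0x_1^{-1}$ for an interior caret with nonempty right subtree $T'$ (as a tree on its own); (4) $x_1^{-1}$ for an interior caret with empty right subtree; (5) $x_0^{-1}\gamma(T')x_0$ for a non-root right caret whose right subtree $T'$ contains an interior caret; (6) nothing for a non-root right caret whose right subtree has no interior caret. The nested traversal normal form $\eta(w)$ is the free reduction of $\gamma(T_+(w))^{-1}\gamma(T_-(w))$, and $\Psi_w$ is the path in $X^1$ from the identity to $w$ labelled $\eta(w)$. For $a\in\{0,1\}$, $e_a(w)$ is the edge with endpoints $w$ and $wx_a^{-1}$; it is good if the loop $\Psi_w\,e_a(w)\,\Psi_{wx_a^{-1}}^{-1}$ is null-homotopic in $X^1$. *)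

theory Defs
  imports Complex_Main
begin

datatype tree = Leaf | Node tree tree

fun nleaves :: "tree \<Rightarrow> nat" where
  "nleaves Leaf = 1"
| "nleaves (Node l r) = nleaves l + nleaves r"

fun ncarets :: "tree \<Rightarrow> nat" where
  "ncarets Leaf = 0"
| "ncarets (Node l r) = ncarets l + ncarets r + 1"

fun leaf_ints :: "tree \<Rightarrow> real \<Rightarrow> real \<Rightarrow> (real \<times> real) list" where
  "leaf_ints Leaf a b = [(a, b)]"
| "leaf_ints (Node l r) a b = leaf_ints l a ((a + b) / 2) @ leaf_ints r ((a + b) / 2) b"

fun pl_map :: "(real \<times> real) list \<Rightarrow> (real \<times> real) list \<Rightarrow> real \<Rightarrow> real" where
  "pl_map ((a, b) # I) ((c, d) # J) t =
     (if a \<le> t \<and> t \<le> b then c + (t - a) * (d - c) / (b - a) else pl_map I J t)"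
| "pl_map _ _ t = t"

text \<open>The element of F represented by the tree pair diagram (T_-, T_+): leaves of T_- (domain)
  are mapped affinely onto the leaves of T_+ (range).\<close>
definition tpd_fun :: "tree \<Rightarrow> tree \<Rightarrow> real \<Rightarrow> real" where
  "tpd_fun Tm Tp = pl_map (leaf_ints Tm 0 1) (leaf_ints Tp 0 1)"

definition thompsonF :: "(real \<Rightarrow> real) set" where
  "thompsonF = {tpd_fun Tm Tp | Tm Tp. ncarets Tm = ncarets Tp}"

text \<open>Group multiplication: \<open>g \<cdot> h = g \<circ> h\<close> (this is the convention under which
  the label of \<open>\<Psi>_w\<close> evaluates to w).\<close>
definition gmul :: "(real \<Rightarrow> real) \<Rightarrow> (real \<Rightarrow> real) \<Rightarrow> real \<Rightarrow> real" where
  "gmul g h = g \<circ> h"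

text \<open>Exposed carets (both children leaves), recorded by the index of their left leaf.\<close>
fun exposed :: "tree \<Rightarrow> nat set" where
  "exposed Leaf = {}"
| "exposed (Node l r) =
     (if l = Leaf \<and> r = Leaf then {0} else exposed l \<union> (\<lambda>i. i + nleaves l) ` exposed r)"

definition reduced_tpd :: "tree \<Rightarrow> tree \<Rightarrow> bool" where
  "reduced_tpd Tm Tp \<longleftrightarrow> ncarets Tm = ncarets Tp \<and> exposed Tm \<inter> exposed Tp = {}"

definition rtpd :: "(real \<Rightarrow> real) \<Rightarrow> tree \<times> tree" where
  "rtpd w = (THE p. reduced_tpd (fst p) (snd p) \<and> tpd_fun (fst p) (snd p) = w)"

definition Tminus :: "(real \<Rightarrow> real) \<Rightarrow> tree" where "Tminus w = fst (rtpd w)"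
definition Tplus :: "(real \<Rightarrow> real) \<Rightarrow> tree" where "Tplus w = snd (rtpd w)"

datatype gen = X0 | X1

text \<open>A letter \<open>(a, True)\<close> is \<open>x_a\<close>, \<open>(a, False)\<close> is \<open>x_a\<^sup>-\<^sup>1\<close>.\<close>
type_synonym letter = "gen \<times> bool"
type_synonym word = "letter list"

fun inv_letter :: "letter \<Rightarrow> letter" where
  "inv_letter (a, s) = (a, \<not> s)"

definition inv_word :: "word \<Rightarrow> word" where
  "inv_word w = rev (map inv_letter w)"

fun freered :: "word \<Rightarrow> word" where
  "freered [] = []"
| "freered (x # w) =
     (case freered w of [] \<Rightarrow> [x] | y # v \<Rightarrow> (if y = inv_letter x then v else x # y # v))"

definition gen_elt :: "letter \<Rightarrow> real \<Rightarrow> real" where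
  "gen_elt l = (case l of
      (X0, True)  \<Rightarrow> tpd_fun (Node Leaf (Node Leaf Leaf)) (Node (Node Leaf Leaf) Leaf)
    | (X0, False) \<Rightarrow> tpd_fun (Node (Node Leaf Leaf) Leaf) (Node Leaf (Node Leaf Leaf))
    | (X1, True)  \<Rightarrow> tpd_fun (Node Leaf (Node Leaf (Node Leaf Leaf))) (Node Leaf (Node (Node Leaf Leaf) Leaf))
    | (X1, False) \<Rightarrow> tpd_fun (Node Leaf (Node (Node Leaf Leaf) Leaf)) (Node Leaf (Node Leaf (Node Leaf Leaf))))"

datatype pos = RootP | LeftP | RightP | InteriorP

fun lpos :: "pos \<Rightarrow> pos" where
  "lpos RootP = LeftP" | "lpos LeftP = LeftP" | "lpos RightP = InteriorP" | "lpos InteriorP = InteriorP"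

fun rpos :: "pos \<Rightarrow> pos" where
  "rpos RootP = RightP" | "rpos RightP = RightP" | "rpos LeftP = InteriorP" | "rpos InteriorP = InteriorP"

text \<open>Whether the subtree hanging below a right caret (along the right side) contains an
  interior caret: i.e. some caret in it is not on the right side of the tree.\<close>
fun contains_interior :: "tree \<Rightarrow> bool" where
  "contains_interior Leaf = False"
| "contains_interior (Node l r) = (l \<noteq> Leaf \<or> contains_interior r)"

text \<open>Left carets: the one with empty left subtree is caret 1 (rule 1),
  the others give \<open>x0\<inverse>\<close> (rule 2).  Interior carets: rule (4), or rule (3) with
  the nested word of the right subtree, skipping it.  Non-root right carets: rule (5) with
  the nested word of the right subtree, skipping it, or rule (6).\<close>
fun gam :: "pos \<Rightarrow> tree \<Rightarrow> word" where
  "gam p Leaf = []"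
| "gam p (Node l r) = gam (lpos p) l @
     (if p = RootP \<or> p = LeftP then (if l = Leaf then [] else [(X0, False)]) @ gam (rpos p) r
      else if p = InteriorP then
        (if r = Leaf then [(X1, False)]
         else [(X0, False)] @ gam InteriorP r @ [(X0, True), (X1, False)])
      else
        (if contains_interior r then [(X0, False)] @ gam RightP r @ [(X0, True)]
         else gam (rpos p) r))"

definition gamma :: "tree \<Rightarrow> word" where
  "gamma T = gam RootP T"

definition eta :: "(real \<Rightarrow> real) \<Rightarrow> word" where
  "eta w = freered (inv_word (gamma (Tplus w)) @ gamma (Tminus w))"

text \<open>Oriented edge \<open>(g, l)\<close>: from g to \<open>g \<cdot> l\<close>.\<close>
type_synonym edge = "(real \<Rightarrow> real) \<times> letter"

definition rev_edge :: "edge \<Rightarrow> edge" where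
  "rev_edge e = (gmul (fst e) (gen_elt (snd e)), inv_letter (snd e))"

fun path_of :: "(real \<Rightarrow> real) \<Rightarrow> word \<Rightarrow> edge list" where
  "path_of g [] = []"
| "path_of g (l # u) = (g, l) # path_of (gmul g (gen_elt l)) u"

definition rev_path :: "edge list \<Rightarrow> edge list" where
  "rev_path p = rev (map rev_edge p)"

definition backtrack_step :: "edge list \<Rightarrow> edge list \<Rightarrow> bool" where
  "backtrack_step p q \<longleftrightarrow> (\<exists>xs e ys. p = xs @ e # rev_edge e # ys \<and> q = xs @ ys)"

definition null_homotopic :: "edge list \<Rightarrow> bool" where
  "null_homotopic p \<longleftrightarrow> equivclp backtrack_step p []"

definition Psi :: "(real \<Rightarrow> real) \<Rightarrow> edge list" where
  "Psi w = path_of id (eta w)"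

text \<open>\<open>e_a(w)\<close>, oriented from w to \<open>w x_a\<inverse>\<close>.\<close>
definition edge_e :: "gen \<Rightarrow> (real \<Rightarrow> real) \<Rightarrow> edge" where
  "edge_e a w = (w, (a, False))"

definition good_edge :: "gen \<Rightarrow> (real \<Rightarrow> real) \<Rightarrow> bool" where
  "good_edge a w \<longleftrightarrow>
     null_homotopic (Psi w @ [edge_e a w] @ rev_path (Psi (gmul w (gen_elt (a, False)))))"

end

theory Submission
  imports Defs
begin

text \<open>A tree pair diagram is invariant under adding a caret at corresponding leaves of both
  trees, and the reduced diagram of w is the unique one without a caret exposed in both trees;
  so \<open>\<eta>(w)\<close> is computed from it. The generators act on the domain tree by rotations at
  the root and at its right child, and read as a sequence of rotations \<open>\<gamma>(T)\<close> builds
  T from the right vine with the same number of carets; hence \<open>\<Psi>\<^sub>w\<close> ends at w.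
  For \<open>e\<^sub>0(w)\<close>, a case analysis on the top of \<open>T\<^sub>-(w)\<close> yields the reduced
  diagram of \<open>w x\<^sub>0\<inverse>\<close>: a rotation at the root, possibly after adding a caret at
  the last leaf of both trees, or followed by cancelling a caret that became exposed in both.
  In every case its nested traversal word is \<open>\<gamma>(T\<^sub>-(w)) x\<^sub>0\<inverse>\<close> up to free
  cancellation, so \<open>\<eta>(w x\<^sub>0\<inverse>)\<close> is the free reduction of \<open>\<eta>(w) x\<^sub>0\<inverse>\<close>
  and the loop collapses to a backtrack.\<close>

section \<open>Piecewise linear maps between subdivisions\<close>

fun subdivision :: "real \<Rightarrow> real \<Rightarrow> (real \<times> real) list \<Rightarrow> bool" where
  "subdivision a b [] = (a = b)"
| "subdivision a b ((x, y) # I) = (x = a \<and> a < y \<and> subdivision y b I)"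

lemma subdivision_le: "subdivision a b I \<Longrightarrow> a \<le> b"
  by (induction a b I rule: subdivision.induct) auto

lemma subdivision_append: "subdivision a m I \<Longrightarrow> subdivision m b J \<Longrightarrow> subdivision a b (I @ J)"
  by (induction a m I rule: subdivision.induct) auto

lemma pl_map_outside:
  "subdivision a b I \<Longrightarrow> length J = length I \<Longrightarrow> t < a \<or> b < t \<Longrightarrow> pl_map I J t = t"
proof (induction a b I arbitrary: J rule: subdivision.induct)
  case (1 a b)
  then show ?case by (cases J) auto
next
  case (2 a b x y I)
  then obtain c d J' where "J = (c, d) # J'" by (cases J) auto
  with 2 show ?case using subdivision_le by fastforce
qed

lemma affine_in_interval:
  fixes a y c w t :: real
  assumes "a < y" "c < w" "a \<le> t" "t \<le> y"
  shows "c \<le> c + (t - a) * (w - c) / (y - a)" "c + (t - a) * (w - c) / (y - a) \<le> w"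
proof -
  have "(t - a) * (w - c) \<le> (y - a) * (w - c)"
    using assms by (intro mult_right_mono) auto
  then have "(t - a) * (w - c) / (y - a) \<le> w - c"
    using assms by (simp add: pos_divide_le_eq mult.commute)
  then show "c + (t - a) * (w - c) / (y - a) \<le> w" by simp
  show "c \<le> c + (t - a) * (w - c) / (y - a)" using assms by simp
qed

lemma pl_map_in_interval:
  "subdivision a b I \<Longrightarrow> subdivision c d J \<Longrightarrow> length J = length I \<Longrightarrow> a < t \<Longrightarrow> t \<le> b
   \<Longrightarrow> c < pl_map I J t \<and> pl_map I J t \<le> d"
proof (induction a b I arbitrary: c J t rule: subdivision.induct)
  case (1 a b)
  then show ?case by auto
next
  case (2 a b x y I)
  then obtain z w J' where J: "J = (z, w) # J'" by (cases J) auto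
  with 2 have "z = c" "c < w" "w \<le> d" "a < y" using subdivision_le by auto
  show ?case
  proof (cases "t \<le> y")
    case True
    have "0 < (t - a) * (w - c) / (y - a)" using 2 \<open>c < w\<close> \<open>a < y\<close> by auto
    with affine_in_interval[of a y c w t] True 2 J \<open>z = c\<close> \<open>c < w\<close> \<open>a < y\<close> \<open>w \<le> d\<close>
    show ?thesis by auto
  next
    case False
    with 2 J have "w < pl_map I J' t \<and> pl_map I J' t \<le> d" by (intro "2.IH") auto
    moreover have "pl_map ((x, y) # I) J t = pl_map I J' t" using 2 J False by auto
    ultimately show ?thesis using \<open>c < w\<close> by linarith
  qed
qed

lemma pl_map_comp:
  "subdivision a b I \<Longrightarrow> subdivision c d J \<Longrightarrow> subdivision e f K \<Longrightarrow>
   length J = length I \<Longrightarrow> length K = length I \<Longrightarrow> a \<le> t \<Longrightarrow> t \<le> b \<Longrightarrow>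
   pl_map J K (pl_map I J t) = pl_map I K t"
proof (induction a b I arbitrary: c J e K t rule: subdivision.induct)
  case (1 a b)
  then show ?case by auto
next
  case (2 a b x y I)
  then obtain z w J' where J: "J = (z, w) # J'" by (cases J) auto
  from 2 obtain u v K' where K: "K = (u, v) # K'" by (cases K) auto
  from 2 J K have zc: "z = c" "c < w" "x = a" "a < y" "u = e" by auto
  show ?case
  proof (cases "t \<le> y")
    case True
    define s where "s = c + (t - a) * (w - c) / (y - a)"
    have "c \<le> s" "s \<le> w"
      unfolding s_def using affine_in_interval[of a y c w t] zc True 2 by auto
    moreover have "(s - c) * (v - e) / (w - c) = (t - a) * (v - e) / (y - a)"
      using zc by (simp add: s_def)
    ultimately show ?thesis using J K zc True 2 by (auto simp: s_def)
  next
    case False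
    have "w < pl_map I J' t \<and> pl_map I J' t \<le> d"
      using 2 J False by (intro pl_map_in_interval) auto
    then have "pl_map J K (pl_map I J' t) = pl_map J' K' (pl_map I J' t)" using J K zc by auto
    also have "\<dots> = pl_map I K' t" using 2 J K False by (intro "2.IH") auto
    finally show ?thesis using K 2 False zc J by auto
  qed
qed

lemma pl_map_self: "subdivision a b I \<Longrightarrow> pl_map I I t = t"
  by (induction a b I rule: subdivision.induct) auto

lemma pl_map_bisect:
  "length I1 = length J1 \<Longrightarrow>
   pl_map (I1 @ (x, y) # I2) (J1 @ (c, d) # J2) t =
   pl_map (I1 @ (x, (x + y) / 2) # ((x + y) / 2, y) # I2) (J1 @ (c, (c + d) / 2) # ((c + d) / 2, d) # J2) t"
proof (induction I1 J1 rule: list_induct2)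
  case Nil
  show ?case
  proof (cases "x \<le> t \<and> t \<le> y")
    case True
    then show ?thesis by (cases "t \<le> (x + y) / 2"; cases "y = x") (simp_all add: field_simps)
  qed auto
next
  case (Cons p I q J)
  then show ?case by (cases p; cases q) auto
qed

text \<open>An affine map on an interval is determined by its values at the midpoint and the right end.\<close>
lemma pl_map_inj:
  "subdivision a b I \<Longrightarrow> length J = length I \<Longrightarrow> length J' = length I \<Longrightarrow>
   (\<And>t. a < t \<Longrightarrow> pl_map I J t = pl_map I J' t) \<Longrightarrow> J = J'"
proof (induction a b I arbitrary: J J' rule: subdivision.induct)
  case (1 a b)
  then show ?case by auto
next
  case (2 a b x y I)
  then obtain c d K where J: "J = (c, d) # K" by (cases J) auto
  from 2 obtain c' d' K' where J': "J' = (c', d') # K'" by (cases J') auto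
  have ay: "a < y" "x = a" using 2 by auto
  have agree: "pl_map ((x, y) # I) J t = pl_map ((x, y) # I) J' t" if "a < t" for t
    using "2.prems"(4) that .
  have at_end: "pl_map ((x, y) # I) ((p, q) # L) y = q"
    and at_mid: "pl_map ((x, y) # I) ((p, q) # L) ((a + y) / 2) = (p + q) / 2" for p q L
    using ay by (simp_all add: field_simps)
  have "d = d'" "(c + d) / 2 = (c' + d') / 2"
    using agree[of y] agree[of "(a + y) / 2"] ay
    unfolding J J' at_end at_mid by auto
  then have cd: "c = c'" "d = d'" by auto
  have "pl_map I K t = pl_map I K' t" if "y < t" for t
    using agree[of t] that ay unfolding J J' by auto
  then have "K = K'" using 2 J J' by (intro "2.IH") auto
  with J J' cd show ?case by simp
qed

section \<open>Leaf subdivisions and tree pair diagrams\<close>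

lemma nleaves_pos: "0 < nleaves T"
  by (induction T) auto

lemma nleaves_ncarets: "nleaves T = ncarets T + 1"
  by (induction T) auto

lemma nleaves_eq_Suc_0: "nleaves T = Suc 0 \<longleftrightarrow> T = Leaf"
proof (cases T)
  case (Node a b)
  then show ?thesis using nleaves_pos[of a] nleaves_pos[of b] by simp
qed simp

lemma nleaves_eq_2: "nleaves T = 2 \<longleftrightarrow> T = Node Leaf Leaf"
proof (cases T)
  case (Node a b)
  then show ?thesis
    using nleaves_pos[of a] nleaves_pos[of b] nleaves_eq_Suc_0[of a] nleaves_eq_Suc_0[of b] by auto
qed simp

lemma length_leaf_ints: "length (leaf_ints T a b) = nleaves T"
  by (induction T arbitrary: a b) auto

lemma subdivision_leaf_ints: "a < b \<Longrightarrow> subdivision a b (leaf_ints T a b)"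
proof (induction T arbitrary: a b)
  case (Node l r)
  then show ?case by (auto intro!: subdivision_append[where m = "(a + b) / 2"])
qed auto

lemma leaf_ints_bounds:
  "a < b \<Longrightarrow> (x, y) \<in> set (leaf_ints T a b) \<Longrightarrow> a \<le> x \<and> x < y \<and> y \<le> b"
proof (induction T arbitrary: a b)
  case (Node l r)
  have "a < (a + b) / 2" "(a + b) / 2 < b" using Node.prems by auto
  moreover have "(x, y) \<in> set (leaf_ints l a ((a + b) / 2)) \<or> (x, y) \<in> set (leaf_ints r ((a + b) / 2) b)"
    using Node.prems(2) by simp
  ultimately show ?case using Node.IH by (meson order.trans less_imp_le)
qed auto

text \<open>The intervals of the left subtree are exactly those ending at or before the midpoint.\<close>
lemma leaf_ints_inj: "a < b \<Longrightarrow> leaf_ints A a b = leaf_ints B a b \<Longrightarrow> A = B"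
proof (induction A arbitrary: B a b)
  case Leaf
  have "nleaves B = 1" using arg_cong[OF Leaf.prems(2), of length] by (simp add: length_leaf_ints)
  then show ?case
  proof (cases B)
    case (Node x y)
    then show ?thesis using nleaves_pos[of x] nleaves_pos[of y] \<open>nleaves B = 1\<close> by simp
  qed simp
next
  case (Node l r)
  let ?m = "(a + b) / 2"
  have am: "a < ?m" "?m < b" using Node.prems by auto
  have ends_left: "snd p \<le> ?m" if "p \<in> set (leaf_ints u a ?m)" for p u
    using leaf_ints_bounds[OF am(1), of "fst p" "snd p" u] that by simp
  have ends_right: "?m < snd p" if "p \<in> set (leaf_ints v ?m b)" for p v
    using leaf_ints_bounds[OF am(2), of "fst p" "snd p" v] that by simp
  have left: "filter (\<lambda>p. snd p \<le> ?m) (leaf_ints (Node u v) a b) = leaf_ints u a ?m"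
    and right: "filter (\<lambda>p. ?m < snd p) (leaf_ints (Node u v) a b) = leaf_ints v ?m b" for u v
  proof -
    have "filter (\<lambda>p. snd p \<le> ?m) (leaf_ints u a ?m) = leaf_ints u a ?m"
      "filter (\<lambda>p. snd p \<le> ?m) (leaf_ints v ?m b) = []"
      "filter (\<lambda>p. ?m < snd p) (leaf_ints u a ?m) = []"
      "filter (\<lambda>p. ?m < snd p) (leaf_ints v ?m b) = leaf_ints v ?m b"
      using ends_left[of _ u] ends_right[of _ v] by (force intro!: filter_True filter_False)+
    then show "filter (\<lambda>p. snd p \<le> ?m) (leaf_ints (Node u v) a b) = leaf_ints u a ?m"
      "filter (\<lambda>p. ?m < snd p) (leaf_ints (Node u v) a b) = leaf_ints v ?m b" by simp_all
  qed
  have "nleaves B = nleaves l + nleaves r"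
    using Node.prems(2) length_leaf_ints[of B a b] length_leaf_ints[of "Node l r" a b] by simp
  then obtain l' r' where B: "B = Node l' r'"
    using nleaves_pos[of l] nleaves_pos[of r] by (cases B) auto
  have "leaf_ints l a ?m = leaf_ints l' a ?m" "leaf_ints r ?m b = leaf_ints r' ?m b"
    using left[of l r] left[of l' r'] right[of l r] right[of l' r'] Node.prems(2) B by metis+
  with Node.IH am B show ?case by blast
qed

fun add_caret :: "tree \<Rightarrow> nat \<Rightarrow> tree" where
  "add_caret Leaf i = (if i = 0 then Node Leaf Leaf else Leaf)"
| "add_caret (Node l r) i =
     (if i < nleaves l then Node (add_caret l i) r else Node l (add_caret r (i - nleaves l)))"

lemma nleaves_add_caret: "i < nleaves T \<Longrightarrow> nleaves (add_caret T i) = Suc (nleaves T)"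
  by (induction T arbitrary: i) auto

lemma add_caret_not_Leaf: "i < nleaves T \<Longrightarrow> add_caret T i \<noteq> Leaf"
  by (induction T arbitrary: i) auto

lemma leaf_ints_add_caret:
  "i < nleaves T \<Longrightarrow> leaf_ints T a b ! i = (x, y) \<Longrightarrow>
   leaf_ints (add_caret T i) a b =
     take i (leaf_ints T a b) @ (x, (x + y) / 2) # ((x + y) / 2, y) # drop (Suc i) (leaf_ints T a b)"
proof (induction T arbitrary: i a b)
  case (Node l r)
  show ?case
  proof (cases "i < nleaves l")
    case True
    with Node show ?thesis by (simp add: nth_append length_leaf_ints)
  next
    case False
    then have "Suc i - nleaves l = Suc (i - nleaves l)" by simp
    with Node False show ?thesis by (simp add: nth_append length_leaf_ints)
  qed
qed auto

lemma tpd_fun_add_caret: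
  assumes "i < nleaves T" "nleaves S = nleaves T"
  shows "tpd_fun (add_caret T i) (add_caret S i) = tpd_fun T S"
proof
  fix t
  let ?L = "leaf_ints T 0 1" and ?M = "leaf_ints S 0 1"
  obtain x y c d where xy: "?L ! i = (x, y)" and cd: "?M ! i = (c, d)" by fastforce
  have i: "i < length ?L" "i < length ?M" using assms by (simp_all add: length_leaf_ints)
  have "tpd_fun T S t = pl_map (take i ?L @ (x, y) # drop (Suc i) ?L) (take i ?M @ (c, d) # drop (Suc i) ?M) t"
    unfolding tpd_fun_def using id_take_nth_drop[OF i(1)] id_take_nth_drop[OF i(2)] xy cd by simp
  also have "\<dots> = tpd_fun (add_caret T i) (add_caret S i) t"
    unfolding tpd_fun_def leaf_ints_add_caret[OF assms(1) xy]
      leaf_ints_add_caret[OF i(2)[unfolded length_leaf_ints] cd]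
    using i by (intro pl_map_bisect) simp
  finally show "tpd_fun (add_caret T i) (add_caret S i) t = tpd_fun T S t" ..
qed

lemma subdivision_unit_leaf_ints: "subdivision 0 1 (leaf_ints T 0 1)"
  by (rule subdivision_leaf_ints) simp

lemma tpd_fun_comp:
  assumes "nleaves A = nleaves B" "nleaves B = nleaves C"
  shows "tpd_fun B C \<circ> tpd_fun A B = tpd_fun A C"
proof
  fix t
  note sub = subdivision_unit_leaf_ints
  show "(tpd_fun B C \<circ> tpd_fun A B) t = tpd_fun A C t"
  proof (cases "0 \<le> t \<and> t \<le> 1")
    case True
    then show ?thesis unfolding tpd_fun_def o_def
      using assms by (intro pl_map_comp[OF sub sub sub]) (simp_all add: length_leaf_ints)
  next
    case False
    then have "t < 0 \<or> 1 < t" by auto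
    then show ?thesis unfolding tpd_fun_def o_def
      using assms pl_map_outside[OF sub] by (simp add: length_leaf_ints)
  qed
qed

lemma tpd_fun_self: "tpd_fun T T = id"
  using pl_map_self[OF subdivision_unit_leaf_ints] by (auto simp: tpd_fun_def)

lemma tpd_fun_inj:
  assumes "tpd_fun U A = tpd_fun U B" "nleaves A = nleaves U" "nleaves B = nleaves U"
  shows "A = B"
proof -
  have "leaf_ints A 0 1 = leaf_ints B 0 1"
    using assms(2,3) fun_cong[OF assms(1)[unfolded tpd_fun_def]]
    by (intro pl_map_inj[OF subdivision_unit_leaf_ints]) (simp_all add: length_leaf_ints)
  then show ?thesis using leaf_ints_inj[of 0 1 A B] by simp
qed

fun graft :: "tree \<Rightarrow> nat \<Rightarrow> tree \<Rightarrow> tree" where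
  "graft Leaf i X = (if i = 0 then X else Leaf)"
| "graft (Node l r) i X =
     (if i < nleaves l then Node (graft l i X) r else Node l (graft r (i - nleaves l) X))"

lemma nleaves_graft: "i < nleaves T \<Longrightarrow> nleaves (graft T i X) = nleaves T + nleaves X - 1"
  by (induction T arbitrary: i) (auto simp: nleaves_pos Suc_le_eq)

lemma graft_Leaf: "graft T i Leaf = T"
  by (induction T arbitrary: i) auto

lemma graft_Node:
  "i < nleaves T \<Longrightarrow> graft T i (Node X Y) = graft (graft (add_caret T i) (Suc i) Y) i X"
proof (induction T arbitrary: i)
  case (Node l r)
  show ?case
  proof (cases "i < nleaves l")
    case True
    then have "i < nleaves (graft (add_caret l i) (Suc i) Y)"
      by (simp add: nleaves_graft nleaves_add_caret nleaves_pos)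
    with True Node.IH(1) show ?thesis by (simp add: nleaves_add_caret)
  next
    case False
    then have "Suc i - nleaves l = Suc (i - nleaves l)" by simp
    with False Node show ?thesis by simp
  qed
qed simp

lemma tpd_fun_graft:
  "i < nleaves T \<Longrightarrow> nleaves S = nleaves T \<Longrightarrow> tpd_fun (graft T i X) (graft S i X) = tpd_fun T S"
proof (induction X arbitrary: T S i)
  case Leaf
  then show ?case by (simp add: graft_Leaf)
next
  case (Node X Y)
  have n: "nleaves (add_caret S i) = nleaves (add_caret T i)" "Suc i < nleaves (add_caret T i)"
    using Node.prems by (simp_all add: nleaves_add_caret)
  have "tpd_fun (graft T i (Node X Y)) (graft S i (Node X Y))
      = tpd_fun (graft (graft (add_caret T i) (Suc i) Y) i X) (graft (graft (add_caret S i) (Suc i) Y) i X)"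
    using Node.prems by (simp add: graft_Node)
  also have "\<dots> = tpd_fun (graft (add_caret T i) (Suc i) Y) (graft (add_caret S i) (Suc i) Y)"
    using Node.prems n by (intro Node.IH(1)) (simp_all add: nleaves_graft nleaves_add_caret nleaves_pos)
  also have "\<dots> = tpd_fun (add_caret T i) (add_caret S i)"
    using n by (intro Node.IH(2)) simp_all
  also have "\<dots> = tpd_fun T S"
    using Node.prems by (simp add: tpd_fun_add_caret)
  finally show ?case .
qed

section \<open>Exposed carets and reduced diagrams\<close>

lemma mem_exposed_Node:
  "i \<in> exposed (Node l r) \<longleftrightarrow>
     (l = Leaf \<and> r = Leaf \<and> i = 0) \<or> i \<in> exposed l \<or> (nleaves l \<le> i \<and> i - nleaves l \<in> exposed r)"
proof (cases "l = Leaf \<and> r = Leaf")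
  case False
  have "i \<in> (\<lambda>k. k + nleaves l) ` exposed r \<longleftrightarrow> nleaves l \<le> i \<and> i - nleaves l \<in> exposed r"
    by (auto simp: image_iff) (metis le_add_diff_inverse2)
  with False show ?thesis by auto
qed auto

declare exposed.simps(2) [simp del]

lemma exposed_bound: "k \<in> exposed T \<Longrightarrow> Suc k < nleaves T"
  by (induction T arbitrary: k) (fastforce simp: mem_exposed_Node nleaves_pos)+

lemma exposed_add_caret: "i < nleaves T \<Longrightarrow> i \<in> exposed (add_caret T i)"
  by (induction T arbitrary: i) (auto simp: mem_exposed_Node)

lemma add_caret_inj:
  "add_caret A i = add_caret B i \<Longrightarrow> i < nleaves A \<Longrightarrow> i < nleaves B \<Longrightarrow> A = B"
proof (induction A arbitrary: B i)
  case Leaf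
  then show ?case by (cases B) (auto split: if_splits dest: add_caret_not_Leaf)
next
  case (Node a b)
  show ?case
  proof (cases B)
    case Leaf
    with Node.prems show ?thesis by (auto split: if_splits dest: add_caret_not_Leaf)
  next
    case (Node c d)
    with Node.prems show ?thesis
      using Node.IH(1)[of i c] Node.IH(2)[of "i - nleaves a" d] nleaves_add_caret[of i a]
        nleaves_add_caret[of i c]
      by (auto split: if_splits)
  qed
qed

lemma exposed_imp_add_caret: "i \<in> exposed T \<Longrightarrow> \<exists>T0. i < nleaves T0 \<and> T = add_caret T0 i"
proof (induction T arbitrary: i)
  case (Node l r)
  then consider "l = Leaf" "r = Leaf" "i = 0" | "i \<in> exposed l" | "nleaves l \<le> i" "i - nleaves l \<in> exposed r"
    by (auto simp: mem_exposed_Node)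
  then show ?case
  proof cases
    case 1
    then show ?thesis by (intro exI[of _ Leaf]) simp
  next
    case 2
    with Node.IH(1) obtain T0 where "i < nleaves T0" "l = add_caret T0 i" by blast
    then show ?thesis by (intro exI[of _ "Node T0 r"]) simp
  next
    case 3
    with Node.IH(2) obtain T0 where "i - nleaves l < nleaves T0" "r = add_caret T0 (i - nleaves l)" by blast
    with 3 show ?thesis by (intro exI[of _ "Node l T0"]) simp
  qed
qed simp

lemma add_caret_commute:
  "a < b \<Longrightarrow> b < nleaves A \<Longrightarrow> add_caret (add_caret A b) a = add_caret (add_caret A a) (Suc b)"
  by (induction A arbitrary: a b) (auto simp: nleaves_add_caret Suc_diff_le)

lemma exposed_add_caret_other:
  "j < nleaves T \<Longrightarrow> i \<noteq> j \<Longrightarrow>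
   i \<in> exposed (add_caret T j) \<longleftrightarrow>
     (Suc i < j \<and> i \<in> exposed T) \<or> (Suc j < i \<and> i - 1 \<in> exposed T)"
proof (induction T arbitrary: i j)
  case (Node l r)
  show ?case
  proof (cases "j < nleaves l")
    case True
    with Node show ?thesis
      using exposed_bound[of i l] exposed_bound[of "i - 1" l] exposed_bound[of _ "add_caret l j"]
        add_caret_not_Leaf[OF True] nleaves_add_caret[OF True]
      by (auto simp: mem_exposed_Node)
  next
    case False
    with Node show ?thesis
      using exposed_bound[of i l] exposed_bound[of "i - 1" l] add_caret_not_Leaf[of "j - nleaves l" r]
      by (auto simp: mem_exposed_Node)
  qed
qed (auto simp: mem_exposed_Node)

text \<open>\<open>i'\<close> is the position of caret i before leaf j is split, \<open>j'\<close> that of leaf j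
  before caret \<open>i'\<close> is added.\<close>
lemma exposed_add_caret_commute:
  assumes exp: "i \<in> exposed (add_caret A j)" and ij: "i \<noteq> j" and j: "j < nleaves A"
  defines "i' \<equiv> if i < j then i else i - 1" and "j' \<equiv> if i < j then j - 1 else j"
  shows "i' \<in> exposed A"
    and "A = add_caret C i' \<Longrightarrow> i' < nleaves C \<Longrightarrow>
         j' < nleaves C \<and> add_caret A j = add_caret (add_caret C j') i"
proof -
  have cases: "(Suc i < j \<and> i \<in> exposed A) \<or> (Suc j < i \<and> i - 1 \<in> exposed A)"
    using exposed_add_caret_other[OF j ij] exp by blast
  then show "i' \<in> exposed A" by (auto simp: i'_def)
  assume A: "A = add_caret C i'" and C: "i' < nleaves C"
  have "j < Suc (nleaves C)" using j A C nleaves_add_caret by simp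
  with cases A C show "j' < nleaves C \<and> add_caret A j = add_caret (add_caret C j') i"
    using add_caret_commute[of i "j - 1" C] add_caret_commute[of j "i - 1" C]
    by (auto simp: i'_def j'_def)
qed

definition diagram_expansion :: "tree \<times> tree \<Rightarrow> tree \<times> tree \<Rightarrow> bool" where
  "diagram_expansion p q \<longleftrightarrow> nleaves (snd p) = nleaves (fst p) \<and>
     (\<exists>i<nleaves (fst p). q = (add_caret (fst p) i, add_caret (snd p) i))"

definition balanced :: "tree \<times> tree \<Rightarrow> bool" where
  "balanced p \<longleftrightarrow> nleaves (snd p) = nleaves (fst p)"

definition without_common_caret :: "tree \<times> tree \<Rightarrow> bool" where
  "without_common_caret p \<longleftrightarrow> exposed (fst p) \<inter> exposed (snd p) = {}"

lemma diagram_expansions_balanced: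
  "diagram_expansion\<^sup>*\<^sup>* p q \<Longrightarrow> balanced p \<Longrightarrow> balanced q"
  by (induction rule: rtranclp_induct)
    (auto simp: diagram_expansion_def balanced_def nleaves_add_caret)

lemma diagram_expansions_tpd_fun:
  "diagram_expansion\<^sup>*\<^sup>* p q \<Longrightarrow> tpd_fun (fst q) (snd q) = tpd_fun (fst p) (snd p)"
  by (induction rule: rtranclp_induct) (auto simp: diagram_expansion_def tpd_fun_add_caret)

lemma common_caret_added_last:
  assumes "without_common_caret P" "diagram_expansion\<^sup>*\<^sup>* P R"
    and "i \<in> exposed (fst R)" "i \<in> exposed (snd R)"
  shows "\<exists>Q. diagram_expansion\<^sup>*\<^sup>* P Q \<and> i < nleaves (fst Q) \<and> nleaves (snd Q) = nleaves (fst Q) \<and>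
    R = (add_caret (fst Q) i, add_caret (snd Q) i)"
  using assms(2-4)
proof (induction arbitrary: i rule: rtranclp_induct)
  case base
  then show ?case using assms(1) unfolding without_common_caret_def by blast
next
  case (step R0 R)
  obtain A B j where R0: "R0 = (A, B)" and j: "j < nleaves A" "nleaves B = nleaves A"
    and R: "R = (add_caret A j, add_caret B j)"
    using step.hyps(2) by (cases R0) (auto simp: diagram_expansion_def)
  show ?case
  proof (cases "i = j")
    case True
    then show ?thesis using step.hyps(1) j R0 R by (intro exI[of _ R0]) auto
  next
    case False
    let ?i = "if i < j then i else i - 1" and ?j = "if i < j then j - 1 else j"
    note commA = exposed_add_caret_commute[of i A j] and commB = exposed_add_caret_commute[of i B j]
    obtain C D where Q0: "diagram_expansion\<^sup>*\<^sup>* P (C, D)" "?i < nleaves C" "nleaves D = nleaves C"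
      and AB: "A = add_caret C ?i" "B = add_caret D ?i"
      using step.IH[of ?i] commA(1) commB(1) step.prems False j R0 R by fastforce
    let ?Q = "(add_caret C ?j, add_caret D ?j)"
    have "?j < nleaves C" "add_caret A j = add_caret (add_caret C ?j) i"
      "add_caret B j = add_caret (add_caret D ?j) i"
      using commA(2)[OF _ False j(1) AB(1) Q0(2)] commB(2)[OF _ False _ AB(2)] step.prems j R Q0
      by auto
    moreover from this have "diagram_expansion (C, D) ?Q"
      using Q0 by (auto simp: diagram_expansion_def)
    ultimately show ?thesis
      using Q0 R by (intro exI[of _ ?Q]) (auto simp: nleaves_add_caret)
  qed
qed

lemma diagram_expansions_without_common_caret:
  "diagram_expansion\<^sup>*\<^sup>* P R \<Longrightarrow> without_common_caret R \<Longrightarrow> P = R"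
proof (induction rule: rtranclp_induct)
  case (step Q R)
  then obtain i where "i < nleaves (fst Q)" "nleaves (snd Q) = nleaves (fst Q)"
    "R = (add_caret (fst Q) i, add_caret (snd Q) i)"
    by (auto simp: diagram_expansion_def)
  then have "i \<in> exposed (fst R) \<inter> exposed (snd R)" by (simp add: exposed_add_caret)
  with step.prems show ?case by (simp add: without_common_caret_def)
qed simp

lemma common_expansion_unique:
  "diagram_expansion\<^sup>*\<^sup>* P R \<Longrightarrow> diagram_expansion\<^sup>*\<^sup>* P' R \<Longrightarrow>
   without_common_caret P \<Longrightarrow> without_common_caret P' \<Longrightarrow> P = P'"
proof (induction "nleaves (fst R)" arbitrary: R rule: less_induct)
  case less
  show ?case
  proof (cases "without_common_caret R")
    case True
    then show ?thesis using diagram_expansions_without_common_caret less.prems by metis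
  next
    case False
    then obtain i where i: "i \<in> exposed (fst R)" "i \<in> exposed (snd R)"
      by (auto simp: without_common_caret_def)
    obtain Q where Q: "diagram_expansion\<^sup>*\<^sup>* P Q" "i < nleaves (fst Q)" "nleaves (snd Q) = nleaves (fst Q)"
        "R = (add_caret (fst Q) i, add_caret (snd Q) i)"
      using common_caret_added_last[OF less.prems(3,1) i] by blast
    obtain Q' where Q': "diagram_expansion\<^sup>*\<^sup>* P' Q'" "i < nleaves (fst Q')"
        "nleaves (snd Q') = nleaves (fst Q')" "R = (add_caret (fst Q') i, add_caret (snd Q') i)"
      using common_caret_added_last[OF less.prems(4,2) i] by blast
    have "Q = Q'"
      using Q Q' add_caret_inj[of "fst Q" i "fst Q'"] add_caret_inj[of "snd Q" i "snd Q'"]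
      by (simp add: prod_eq_iff)
    moreover have "nleaves (fst Q) < nleaves (fst R)" using Q by (simp add: nleaves_add_caret)
    ultimately show ?thesis using less.hyps[of Q] Q Q' less.prems by blast
  qed
qed

lemma exists_reduction:
  "balanced p \<Longrightarrow> \<exists>q. without_common_caret q \<and> balanced q \<and> diagram_expansion\<^sup>*\<^sup>* q p"
proof (induction "nleaves (fst p)" arbitrary: p rule: less_induct)
  case less
  show ?case
  proof (cases "without_common_caret p")
    case False
    then obtain i where "i \<in> exposed (fst p)" "i \<in> exposed (snd p)"
      by (auto simp: without_common_caret_def)
    then obtain A B where A: "i < nleaves A" "fst p = add_caret A i"
      and B: "i < nleaves B" "snd p = add_caret B i"
      using exposed_imp_add_caret by meson
    then have "balanced (A, B)" "diagram_expansion (A, B) p" "nleaves A < nleaves (fst p)"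
      using less.prems by (auto simp: balanced_def diagram_expansion_def nleaves_add_caret prod_eq_iff)
    then show ?thesis using less.hyps[of "(A, B)"] by (auto intro: rtranclp.rtrancl_into_rtrancl)
  qed (use less.prems in blast)
qed

definition add_caret_step :: "tree \<Rightarrow> tree \<Rightarrow> bool" where
  "add_caret_step A B \<longleftrightarrow> (\<exists>i<nleaves A. B = add_caret A i)"

lemma add_caret_steps_lift:
  "add_caret_step\<^sup>*\<^sup>* A U \<Longrightarrow> nleaves S = nleaves A \<Longrightarrow> \<exists>S'. diagram_expansion\<^sup>*\<^sup>* (A, S) (U, S')"
proof (induction rule: rtranclp_induct)
  case (step U V)
  then obtain S' where S': "diagram_expansion\<^sup>*\<^sup>* (A, S) (U, S')" by blast
  then have "nleaves S' = nleaves U"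
    using diagram_expansions_balanced[OF S'] step.prems by (simp add: balanced_def)
  moreover obtain i where "i < nleaves U" "V = add_caret U i"
    using step.hyps(2) by (auto simp: add_caret_step_def)
  ultimately have "diagram_expansion (U, S') (V, add_caret S' i)"
    by (auto simp: diagram_expansion_def)
  with S' show ?case by (meson rtranclp.rtrancl_into_rtrancl)
qed blast

lemma add_caret_steps_Node:
  assumes "add_caret_step\<^sup>*\<^sup>* a a'" "add_caret_step\<^sup>*\<^sup>* b b'"
  shows "add_caret_step\<^sup>*\<^sup>* (Node a b) (Node a' b')"
proof -
  have "add_caret_step\<^sup>*\<^sup>* (Node a b) (Node a' b)"
    using assms(1)
  proof (induction rule: rtranclp_induct)
    case (step y z)
    then obtain i where "i < nleaves y" "z = add_caret y i" by (auto simp: add_caret_step_def)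
    then have "add_caret_step (Node y b) (Node z b)" by (auto simp: add_caret_step_def)
    with step.IH show ?case by simp
  qed simp
  also have "add_caret_step\<^sup>*\<^sup>* (Node a' b) (Node a' b')"
    using assms(2)
  proof (induction rule: rtranclp_induct)
    case (step y z)
    then obtain i where "i < nleaves y" "z = add_caret y i" by (auto simp: add_caret_step_def)
    then have "add_caret_step (Node a' y) (Node a' z)"
      unfolding add_caret_step_def by (intro exI[of _ "i + nleaves a'"]) simp
    with step.IH show ?case by simp
  qed simp
  finally show ?thesis .
qed

lemma add_caret_steps_Leaf: "add_caret_step\<^sup>*\<^sup>* Leaf X"
proof (induction X)
  case (Node x y)
  have "add_caret_step Leaf (Node Leaf Leaf)" by (auto simp: add_caret_step_def)
  with add_caret_steps_Node[OF Node.IH] show ?case by simp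
qed simp

fun tree_join :: "tree \<Rightarrow> tree \<Rightarrow> tree" where
  "tree_join Leaf B = B"
| "tree_join A Leaf = A"
| "tree_join (Node a b) (Node c d) = Node (tree_join a c) (tree_join b d)"

lemma add_caret_steps_tree_join:
  "add_caret_step\<^sup>*\<^sup>* A (tree_join A B)" "add_caret_step\<^sup>*\<^sup>* B (tree_join A B)"
  by (induction A B rule: tree_join.induct) (auto simp: add_caret_steps_Leaf add_caret_steps_Node)

lemma reduced_tpd_unique:
  assumes "reduced_tpd T S" "reduced_tpd T' S'" "tpd_fun T S = tpd_fun T' S'"
  shows "T = T' \<and> S = S'"
proof -
  let ?U = "tree_join T T'"
  have n: "nleaves S = nleaves T" "nleaves S' = nleaves T'"
    using assms unfolding reduced_tpd_def by (simp_all add: nleaves_ncarets)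
  obtain S1 where S1: "diagram_expansion\<^sup>*\<^sup>* (T, S) (?U, S1)"
    using add_caret_steps_lift[OF add_caret_steps_tree_join(1) n(1)] by blast
  obtain S2 where S2: "diagram_expansion\<^sup>*\<^sup>* (T', S') (?U, S2)"
    using add_caret_steps_lift[OF add_caret_steps_tree_join(2) n(2)] by blast
  have "nleaves S1 = nleaves ?U" "nleaves S2 = nleaves ?U"
    using diagram_expansions_balanced[OF S1] diagram_expansions_balanced[OF S2] n
    by (simp_all add: balanced_def)
  moreover have "tpd_fun ?U S1 = tpd_fun ?U S2"
    using diagram_expansions_tpd_fun[OF S1] diagram_expansions_tpd_fun[OF S2] assms(3) by simp
  ultimately have "S1 = S2" using tpd_fun_inj by blast
  then have "(T, S) = (T', S')"
    using common_expansion_unique[OF S1, of "(T', S')"] S2 assms(1,2)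
    unfolding reduced_tpd_def without_common_caret_def by simp
  then show ?thesis by simp
qed

lemma rtpd_tpd_fun: "reduced_tpd T S \<Longrightarrow> rtpd (tpd_fun T S) = (T, S)"
  unfolding rtpd_def by (rule the_equality) (auto dest: reduced_tpd_unique)

lemma thompsonF_reduced_tpd:
  assumes "w \<in> thompsonF"
  obtains T S where "reduced_tpd T S" "w = tpd_fun T S"
proof -
  obtain T0 S0 where w: "w = tpd_fun T0 S0" "ncarets T0 = ncarets S0"
    using assms unfolding thompsonF_def by blast
  then have "balanced (T0, S0)" by (simp add: balanced_def nleaves_ncarets)
  then obtain q where "without_common_caret q" "balanced q" "diagram_expansion\<^sup>*\<^sup>* q (T0, S0)"
    using exists_reduction by blast
  with w show ?thesis
    using diagram_expansions_tpd_fun that[of "fst q" "snd q"]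
    by (auto simp: reduced_tpd_def without_common_caret_def balanced_def nleaves_ncarets)
qed

section \<open>Free reduction\<close>

fun freely_reduced :: "word \<Rightarrow> bool" where
  "freely_reduced (x # y # z) \<longleftrightarrow> y \<noteq> inv_letter x \<and> freely_reduced (y # z)"
| "freely_reduced _ \<longleftrightarrow> True"

lemma inv_letter_inv_letter [simp]: "inv_letter (inv_letter x) = x"
  by (cases x) simp

lemma inv_word_simps [simp]:
  "inv_word [] = []" "inv_word (x # u) = inv_word u @ [inv_letter x]"
  "inv_word (u @ v) = inv_word v @ inv_word u"
  by (simp_all add: inv_word_def)

lemma freely_reduced_Cons: "freely_reduced (x # z) \<Longrightarrow> freely_reduced z"
  by (cases z) auto

lemma freely_reduced_appendD: "freely_reduced (u @ v) \<Longrightarrow> freely_reduced u"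
  by (induction u rule: freely_reduced.induct) (auto dest: freely_reduced_Cons)

lemma freely_reduced_freered: "freely_reduced (freered u)"
  by (induction u) (auto split: list.split dest: freely_reduced_Cons)

lemma freered_freely_reduced: "freely_reduced u \<Longrightarrow> freered u = u"
proof (induction u)
  case (Cons x w)
  then have "freered w = w" using freely_reduced_Cons by blast
  with Cons.prems show ?case by (cases w) auto
qed simp

lemma freered_idem [simp]: "freered (freered u) = freered u"
  by (rule freered_freely_reduced[OF freely_reduced_freered])

lemma freered_Cons_freered: "freered (x # freered u) = freered (x # u)"
  by simp

lemma freered_cancel: "freered (x # inv_letter x # v) = freered v"
proof (cases "freered v")
  case (Cons y z)
  have red: "freely_reduced (y # z)" using freely_reduced_freered[of v] Cons by simp
  show ?thesis
  proof (cases "y = x")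
    case True
    have "freered (x # inv_letter x # v) = freered (x # z)"
      using Cons True freered_Cons_freered[of x "inv_letter x # v"]
      by (simp add: freered_freely_reduced[OF freely_reduced_Cons[OF red]])
    also have "\<dots> = x # z" by (rule freered_freely_reduced) (use red True in simp)
    finally show ?thesis using Cons True by simp
  qed (use Cons in simp)
qed simp

lemma freered_append_freered: "freered (u @ freered v) = freered (u @ v)"
proof (induction u)
  case (Cons x u)
  then show ?case by (metis append_Cons freered_Cons_freered)
qed simp

lemma freered_freered_append: "freered (freered u @ v) = freered (u @ v)"
proof (induction u)
  case (Cons x u)
  have "freered ((x # u) @ v) = freered (x # freered u @ v)"
    using Cons.IH freered_Cons_freered by (metis append_Cons)
  also have "\<dots> = freered (freered (x # u) @ v)"
  proof (cases "freered u")
    case (Cons y z)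
    show ?thesis
    proof (cases "y = inv_letter x")
      case True
      then show ?thesis using Cons freered_cancel[of x "z @ v"] by simp
    qed (use Cons in simp)
  qed simp
  finally show ?case ..
qed simp

lemma freered_cancel_middle: "freered (u @ x # inv_letter x # v) = freered (u @ v)"
  by (metis freered_append_freered freered_cancel)

lemma freered_cancel_last: "freered (u @ [x, inv_letter x]) = freered u"
  using freered_cancel_middle[of u x "[]"] by simp

lemma freered_snoc:
  assumes "freely_reduced a"
  shows "freered (a @ [y]) = (if a \<noteq> [] \<and> last a = inv_letter y then butlast a else a @ [y])"
proof (cases "a \<noteq> [] \<and> last a = inv_letter y")
  case True
  then obtain a' where a: "a = a' @ [inv_letter y]" by (metis append_butlast_last_id)
  then have "freely_reduced a'" using assms freely_reduced_appendD by blast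
  then show ?thesis
    using a freered_cancel_middle[of a' "inv_letter y" "[]"] by (simp add: freered_freely_reduced)
next
  case False
  have "freely_reduced (a @ [y])" using assms False
    by (induction a rule: freely_reduced.induct) auto
  with False show ?thesis by (auto simp: freered_freely_reduced)
qed

section \<open>Generators as rotations\<close>

text \<open>Rotation at the root (\<open>x\<^sub>0\<close>) or at its right child (\<open>x\<^sub>1\<close>), in the
  direction in which right multiplication by the generator transforms the domain tree.\<close>
fun rotation :: "letter \<Rightarrow> tree \<Rightarrow> tree option" where
  "rotation (X0, False) (Node L (Node R1 R2)) = Some (Node (Node L R1) R2)"
| "rotation (X0, True) (Node (Node L R1) R2) = Some (Node L (Node R1 R2))"
| "rotation (X1, False) (Node L (Node R1 (Node R2 R3))) = Some (Node L (Node (Node R1 R2) R3))"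
| "rotation (X1, True) (Node L (Node (Node R1 R2) R3)) = Some (Node L (Node R1 (Node R2 R3)))"
| "rotation _ _ = None"

fun rotations :: "word \<Rightarrow> tree \<Rightarrow> tree option" where
  "rotations [] D = Some D"
| "rotations (l # u) D = (case rotation l D of None \<Rightarrow> None | Some D' \<Rightarrow> rotations u D')"

definition mul_word :: "(real \<Rightarrow> real) \<Rightarrow> word \<Rightarrow> real \<Rightarrow> real" where
  "mul_word g u = foldl (\<lambda>g l. gmul g (gen_elt l)) g u"

lemma mul_word_simps [simp]:
  "mul_word g [] = g" "mul_word g (l # u) = mul_word (gmul g (gen_elt l)) u"
  "mul_word g (u @ v) = mul_word (mul_word g u) v"
  by (simp_all add: mul_word_def)

lemma nleaves_rotation: "rotation l D = Some D' \<Longrightarrow> nleaves D' = nleaves D"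
  by (induction l D rule: rotation.induct) auto

lemma rotations_append: "rotations u D = Some D1 \<Longrightarrow> rotations (u @ v) D = rotations v D1"
  by (induction u arbitrary: D) (auto split: option.splits)

lemma rotation_inv_letter: "rotation l D = Some D' \<Longrightarrow> rotation (inv_letter l) D' = Some D"
  by (induction l D rule: rotation.induct) auto

lemma rotations_inv_word: "rotations u D = Some D' \<Longrightarrow> rotations (inv_word u) D' = Some D"
  by (induction u arbitrary: D) (auto simp: rotations_append split: option.splits dest: rotation_inv_letter)

lemma rotation_graft:
  "rotation l D = Some D' \<Longrightarrow> i < nleaves D \<Longrightarrow> rotation l (graft D i X) = Some (graft D' i X)"
  by (induction l D rule: rotation.induct) (auto simp: diff_diff_left add.assoc)

lemma rotations_graft:
  "rotations u D = Some D' \<Longrightarrow> i < nleaves D \<Longrightarrow> rotations u (graft D i X) = Some (graft D' i X)"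
proof (induction u arbitrary: D)
  case (Cons l u)
  then obtain D1 where "rotation l D = Some D1" "rotations u D1 = Some D'" by (auto split: option.splits)
  with Cons show ?case by (simp add: rotation_graft nleaves_rotation)
qed simp

lemma tpd_fun_graft_eq:
  "tpd_fun T S = f \<Longrightarrow> i < nleaves T \<Longrightarrow> nleaves S = nleaves T \<Longrightarrow> tpd_fun (graft T i X) (graft S i X) = f"
  using tpd_fun_graft by simp

lemma gen_elt_rotation: "rotation l D = Some D' \<Longrightarrow> gen_elt l = tpd_fun D' D"
proof (induction l D rule: rotation.induct)
  case (1 L R1 R2)
  have "tpd_fun (graft (graft (graft (Node (Node Leaf Leaf) Leaf) 2 R2) 1 R1) 0 L)
      (graft (graft (graft (Node Leaf (Node Leaf Leaf)) 2 R2) 1 R1) 0 L) = gen_elt (X0, False)"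
    by (intro tpd_fun_graft_eq) (simp_all add: gen_elt_def nleaves_graft nleaves_pos)
  with 1 show ?case by simp
next
  case (2 L R1 R2)
  have "tpd_fun (graft (graft (graft (Node Leaf (Node Leaf Leaf)) 2 R2) 1 R1) 0 L)
      (graft (graft (graft (Node (Node Leaf Leaf) Leaf) 2 R2) 1 R1) 0 L) = gen_elt (X0, True)"
    by (intro tpd_fun_graft_eq) (simp_all add: gen_elt_def nleaves_graft nleaves_pos)
  with 2 show ?case by simp
next
  case (3 L R1 R2 R3)
  have "tpd_fun (graft (graft (graft (graft (Node Leaf (Node (Node Leaf Leaf) Leaf)) 3 R3) 2 R2) 1 R1) 0 L)
      (graft (graft (graft (graft (Node Leaf (Node Leaf (Node Leaf Leaf))) 3 R3) 2 R2) 1 R1) 0 L)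
      = gen_elt (X1, False)"
    by (intro tpd_fun_graft_eq) (simp_all add: gen_elt_def nleaves_graft nleaves_pos)
  with 3 show ?case by simp
next
  case (4 L R1 R2 R3)
  have "tpd_fun (graft (graft (graft (graft (Node Leaf (Node Leaf (Node Leaf Leaf))) 3 R3) 2 R2) 1 R1) 0 L)
      (graft (graft (graft (graft (Node Leaf (Node (Node Leaf Leaf) Leaf)) 3 R3) 2 R2) 1 R1) 0 L)
      = gen_elt (X1, True)"
    by (intro tpd_fun_graft_eq) (simp_all add: gen_elt_def nleaves_graft nleaves_pos)
  with 4 show ?case by simp
qed simp_all

lemma gmul_tpd_fun_rotation:
  assumes "rotation l D = Some D'" "nleaves S = nleaves D"
  shows "gmul (tpd_fun D S) (gen_elt l) = tpd_fun D' S"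
  unfolding gmul_def gen_elt_rotation[OF assms(1)]
  using nleaves_rotation[OF assms(1)] assms(2) by (intro tpd_fun_comp) simp_all

lemma mul_word_rotations:
  "rotations u D = Some D' \<Longrightarrow> nleaves S = nleaves D \<Longrightarrow> mul_word (tpd_fun D S) u = tpd_fun D' S"
proof (induction u arbitrary: D)
  case (Cons l u)
  then obtain D1 where D1: "rotation l D = Some D1" "rotations u D1 = Some D'" by (auto split: option.splits)
  with Cons show ?case by (simp add: gmul_tpd_fun_rotation nleaves_rotation)
qed simp

lemma gmul_gen_elt_inv_letter: "gmul (gmul g (gen_elt l)) (gen_elt (inv_letter l)) = g"
proof -
  obtain D D' where rot: "rotation l D = Some D'"
  proof -
    obtain a s where "l = (a, s)" by fastforce
    then show thesis
      using that[of "Node (Node Leaf Leaf) (Node (Node Leaf Leaf) (Node Leaf Leaf))"]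
      by (cases a; cases s) auto
  qed
  then have "gen_elt l \<circ> gen_elt (inv_letter l) = tpd_fun D' D \<circ> tpd_fun D D'"
    using gen_elt_rotation[OF rot] gen_elt_rotation[OF rotation_inv_letter[OF rot]] by simp
  also have "\<dots> = id"
    using nleaves_rotation[OF rot] tpd_fun_comp[of D D' D] by (simp add: tpd_fun_self)
  finally show ?thesis by (simp add: gmul_def comp_assoc)
qed

lemma mul_word_freered: "mul_word g (freered u) = mul_word g u"
proof (induction u arbitrary: g)
  case (Cons x u)
  have "mul_word g (x # u) = mul_word (gmul g (gen_elt x)) (freered u)"
    using Cons.IH by simp
  also have "\<dots> = mul_word g (freered (x # u))"
    by (cases "freered u") (auto simp: gmul_gen_elt_inv_letter)
  finally show ?case ..
qed simp

section \<open>The nested traversal word builds the tree from the right vine\<close>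

fun right_vine :: "nat \<Rightarrow> tree" where
  "right_vine 0 = Leaf"
| "right_vine (Suc n) = Node Leaf (right_vine n)"

lemma nleaves_right_vine [simp]: "nleaves (right_vine n) = Suc n"
  by (induction n) auto

lemma ncarets_right_vine [simp]: "ncarets (right_vine n) = n"
  by (induction n) auto

lemma right_vine_add [simp]:
  "right_vine (n + 1) = Node Leaf (right_vine n)"
  "right_vine (n + 2) = Node Leaf (Node Leaf (right_vine n))"
  by (simp_all add: numeral_2_eq_2)

lemma right_vine_split: "right_vine (k + m) = graft (right_vine k) k (right_vine m)"
  by (induction k) auto

lemma right_vine_if_not_contains_interior: "\<not> contains_interior r \<Longrightarrow> r = right_vine (ncarets r)"
  by (induction r) auto

lemma gam_RightP_if_not_contains_interior: "\<not> contains_interior r \<Longrightarrow> gam RightP r = []"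
  by (induction r) auto

lemma rotations_gam_InteriorP:
  "rotations (gam InteriorP t) (right_vine (ncarets t + 2)) = Some (Node Leaf (Node t Leaf))"
proof (induction t)
  case Leaf
  then show ?case by (simp add: numeral_2_eq_2)
next
  case (Node a b)
  have "rotations (gam InteriorP a) (right_vine (ncarets a + 2 + (ncarets b + 1)))
      = Some (graft (Node Leaf (Node a Leaf)) (ncarets a + 2) (right_vine (ncarets b + 1)))"
    unfolding right_vine_split[of "ncarets a + 2"] by (rule rotations_graft[OF Node.IH(1)]) simp
  then have a: "rotations (gam InteriorP a) (right_vine (ncarets (Node a b) + 2))
      = Some (Node Leaf (Node a (Node Leaf (right_vine (ncarets b)))))"
    by (simp add: nleaves_ncarets numeral_2_eq_2 add_ac)
  show ?case
  proof (cases "b = Leaf")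
    case True
    with a show ?thesis by (simp add: rotations_append)
  next
    case False
    have "rotations (gam InteriorP b) (graft (right_vine (ncarets b + 2)) 0 (Node Leaf a))
        = Some (graft (Node Leaf (Node b Leaf)) 0 (Node Leaf a))"
      by (rule rotations_graft[OF Node.IH(2)]) simp
    then have b: "rotations (gam InteriorP b) (Node (Node Leaf a) (Node Leaf (right_vine (ncarets b))))
        = Some (Node (Node Leaf a) (Node b Leaf))"
      by (simp add: numeral_2_eq_2)
    from False have "gam InteriorP (Node a b) =
        gam InteriorP a @ [(X0, False)] @ gam InteriorP b @ [(X0, True), (X1, False)]"
      by simp
    with a b show ?thesis by (simp add: rotations_append)
  qed
qed

lemma rotations_gam_RightP: "rotations (gam RightP r) (right_vine (ncarets r + 1)) = Some (Node Leaf r)"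
proof (induction r)
  case (Node r1 r2)
  have "rotations (gam InteriorP r1) (right_vine (ncarets r1 + 2 + ncarets r2))
      = Some (graft (Node Leaf (Node r1 Leaf)) (ncarets r1 + 2) (right_vine (ncarets r2)))"
    unfolding right_vine_split[of "ncarets r1 + 2"] by (rule rotations_graft[OF rotations_gam_InteriorP]) simp
  then have r1: "rotations (gam InteriorP r1) (right_vine (ncarets (Node r1 r2) + 1))
      = Some (Node Leaf (Node r1 (right_vine (ncarets r2))))"
    by (simp add: nleaves_ncarets numeral_2_eq_2 add_ac)
  show ?case
  proof (cases "contains_interior r2")
    case False
    with r1 right_vine_if_not_contains_interior[OF False] gam_RightP_if_not_contains_interior[OF False] show ?thesis by simp
  next
    case True
    have "rotations (gam RightP r2) (graft (right_vine (ncarets r2 + 1)) 0 (Node Leaf r1))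
        = Some (graft (Node Leaf r2) 0 (Node Leaf r1))"
      by (rule rotations_graft[OF Node.IH(2)]) simp
    then have r2: "rotations (gam RightP r2) (Node (Node Leaf r1) (right_vine (ncarets r2)))
        = Some (Node (Node Leaf r1) r2)"
      by simp
    have "rotation (X0, False) (Node Leaf (Node r1 (right_vine (ncarets r2))))
        = Some (Node (Node Leaf r1) (right_vine (ncarets r2)))"
      by (cases "ncarets r2") simp_all
    with True r1 r2 show ?thesis by (simp add: rotations_append)
  qed
qed simp

lemma rotations_gam_LeftP:
  "l \<noteq> Leaf \<Longrightarrow> rotations (gam LeftP l @ [(X0, False)]) (right_vine (ncarets l + 1)) = Some (Node l Leaf)"
proof (induction l)
  case (Node l1 l2)
  have l2: "rotations (gam InteriorP l2) (graft (right_vine (ncarets l2 + 2)) 0 l1)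
      = Some (graft (Node Leaf (Node l2 Leaf)) 0 l1)"
    by (rule rotations_graft[OF rotations_gam_InteriorP]) simp
  show ?case
  proof (cases "l1 = Leaf")
    case True
    with l2 show ?thesis by (simp add: rotations_append numeral_2_eq_2)
  next
    case False
    have "rotations (gam LeftP l1 @ [(X0, False)]) (right_vine (ncarets l1 + 1 + (ncarets l2 + 1)))
        = Some (graft (Node l1 Leaf) (ncarets l1 + 1) (right_vine (ncarets l2 + 1)))"
      unfolding right_vine_split[of "ncarets l1 + 1"] by (rule rotations_graft[OF Node.IH(1)[OF False]]) simp
    then have l1: "rotations (gam LeftP l1 @ [(X0, False)]) (right_vine (ncarets (Node l1 l2) + 1))
        = Some (graft (right_vine (ncarets l2 + 2)) 0 l1)"
      by (simp add: nleaves_ncarets add_ac)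
    from False have "rotations (gam LeftP (Node l1 l2) @ [(X0, False)]) (right_vine (ncarets (Node l1 l2) + 1))
        = rotations ((gam LeftP l1 @ [(X0, False)]) @ gam InteriorP l2 @ [(X0, False)])
            (right_vine (ncarets (Node l1 l2) + 1))"
      by simp
    also have "\<dots> = rotations (gam InteriorP l2 @ [(X0, False)]) (graft (right_vine (ncarets l2 + 2)) 0 l1)"
      by (rule rotations_append[OF l1])
    also have "\<dots> = rotations [(X0, False)] (graft (Node Leaf (Node l2 Leaf)) 0 l1)"
      by (rule rotations_append[OF l2])
    finally show ?thesis by simp
  qed
qed simp

lemma rotations_gamma: "rotations (gamma T) (right_vine (ncarets T)) = Some T"
proof (cases T)
  case (Node l r)
  show ?thesis
  proof (cases "l = Leaf")
    case True
    with Node rotations_gam_RightP[of r] show ?thesis by (simp add: gamma_def)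
  next
    case False
    have "rotations (gam LeftP l @ [(X0, False)]) (right_vine (ncarets l + 1 + ncarets r))
        = Some (graft (Node l Leaf) (ncarets l + 1) (right_vine (ncarets r)))"
      unfolding right_vine_split[of "ncarets l + 1"] by (rule rotations_graft[OF rotations_gam_LeftP[OF False]]) simp
    then have l: "rotations (gam LeftP l @ [(X0, False)]) (right_vine (ncarets T))
        = Some (graft (right_vine (ncarets r + 1)) 0 l)"
      using Node by (simp add: nleaves_ncarets add_ac)
    have r: "rotations (gam RightP r) (graft (right_vine (ncarets r + 1)) 0 l) = Some (graft (Node Leaf r) 0 l)"
      by (rule rotations_graft[OF rotations_gam_RightP]) simp
    from Node False have "rotations (gamma T) (right_vine (ncarets T))
        = rotations ((gam LeftP l @ [(X0, False)]) @ gam RightP r) (right_vine (ncarets T))"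
      by (simp add: gamma_def)
    also have "\<dots> = Some (graft (Node Leaf r) 0 l)"
      unfolding rotations_append[OF l] by (rule r)
    finally show ?thesis using Node by simp
  qed
qed (simp add: gamma_def)

lemma mul_word_gamma:
  assumes "ncarets T = ncarets S"
  shows "mul_word id (freered (inv_word (gamma S) @ gamma T)) = tpd_fun T S"
proof -
  have "mul_word id (inv_word (gamma S)) = mul_word (tpd_fun S S) (inv_word (gamma S))"
    by (simp add: tpd_fun_self)
  also have "\<dots> = tpd_fun (right_vine (ncarets S)) S"
    by (rule mul_word_rotations[OF rotations_inv_word[OF rotations_gamma]]) simp
  finally have "mul_word id (inv_word (gamma S)) = tpd_fun (right_vine (ncarets S)) S" .
  moreover have "rotations (gamma T) (right_vine (ncarets S)) = Some T"
    using rotations_gamma[of T] assms by simp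
  ultimately show ?thesis
    using mul_word_rotations[of "gamma T" "right_vine (ncarets S)" T S]
    by (simp add: mul_word_freered nleaves_ncarets)
qed

lemma eta_tpd_fun: "reduced_tpd T S \<Longrightarrow> eta (tpd_fun T S) = freered (inv_word (gamma S) @ gamma T)"
  by (simp add: eta_def Tminus_def Tplus_def rtpd_tpd_fun)

lemma freely_reduced_eta: "freely_reduced (eta w)"
  by (simp add: eta_def freely_reduced_freered)

lemma mul_word_eta: "w \<in> thompsonF \<Longrightarrow> mul_word id (eta w) = w"
  by (elim thompsonF_reduced_tpd) (simp add: eta_tpd_fun mul_word_gamma reduced_tpd_def)

section \<open>Paths in the Cayley graph\<close>

lemma path_of_append: "path_of g (u @ v) = path_of g u @ path_of (mul_word g u) v"
  by (induction u arbitrary: g) auto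

lemma rev_path_append: "rev_path (p @ q) = rev_path q @ rev_path p"
  by (simp add: rev_path_def)

lemma backtrack_step_spur: "backtrack_step (p @ [e, rev_edge e] @ q) (p @ q)"
  unfolding backtrack_step_def by (intro exI[of _ p] exI[of _ e] exI[of _ q]) simp

lemma null_homotopic_path_rev_path: "null_homotopic (p @ rev_path p)"
proof (induction p rule: rev_induct)
  case (snoc e p)
  have "backtrack_step ((p @ [e]) @ rev_path (p @ [e])) (p @ rev_path p)"
    using backtrack_step_spur[of p e "rev_path p"] by (simp add: rev_path_def)
  with snoc show ?case unfolding null_homotopic_def by (meson equivclp_trans r_into_equivclp)
qed (simp add: null_homotopic_def rev_path_def)

lemma null_homotopic_spur: "null_homotopic (p @ [e, rev_edge e] @ rev_path p)"
  using null_homotopic_path_rev_path backtrack_step_spur[of p e "rev_path p"]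
  unfolding null_homotopic_def by (meson equivclp_trans r_into_equivclp)

text \<open>If appending \<open>x\<^sub>a\<inverse>\<close> to the normal form of w and reducing gives the normal form of
  \<open>w x\<^sub>a\<inverse>\<close>, the loop either traverses \<open>e\<^sub>a(w)\<close> at the end of \<open>\<Psi>\<^sub>w\<close> and back, or
  traverses the last edge of \<open>\<Psi>\<^sub>w\<close>, which is \<open>e\<^sub>a(w)\<close> reversed, and back.\<close>
lemma good_edge_if_eta_snoc:
  assumes "w \<in> thompsonF"
    and "eta (gmul w (gen_elt (a, False))) = freered (eta w @ [(a, False)])"
  shows "good_edge a w"
proof (cases "eta w \<noteq> [] \<and> last (eta w) = (a, True)")
  case True
  then obtain u where u: "eta w = u @ [(a, True)]" by (metis append_butlast_last_id)
  let ?v = "mul_word id u"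
  have "eta (gmul w (gen_elt (a, False))) = u"
    using assms(2) freered_snoc[OF freely_reduced_eta[of w]] True u by simp
  moreover have "w = gmul ?v (gen_elt (a, True))" using mul_word_eta[OF assms(1)] u by simp
  then have "rev_edge (?v, (a, True)) = (w, (a, False))" by (simp add: rev_edge_def)
  ultimately have "Psi w @ [edge_e a w] @ rev_path (Psi (gmul w (gen_elt (a, False)))) =
      path_of id u @ [(?v, (a, True)), rev_edge (?v, (a, True))] @ rev_path (path_of id u)"
    unfolding Psi_def edge_e_def u by (simp add: path_of_append)
  then show ?thesis unfolding good_edge_def using null_homotopic_spur by simp
next
  case False
  then have "eta (gmul w (gen_elt (a, False))) = eta w @ [(a, False)]"
    using assms(2) freered_snoc[OF freely_reduced_eta[of w]] by auto
  then have "Psi w @ [edge_e a w] @ rev_path (Psi (gmul w (gen_elt (a, False)))) =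
      Psi w @ [(w, (a, False)), rev_edge (w, (a, False))] @ rev_path (Psi w)"
    unfolding Psi_def edge_e_def using mul_word_eta[OF assms(1)]
    by (simp add: path_of_append rev_path_append rev_path_def)
  then show ?thesis unfolding good_edge_def using null_homotopic_spur by simp
qed

section \<open>Right multiplication by \<open>x\<^sub>0\<inverse>\<close> on reduced diagrams\<close>

lemma add_caret_Node_last:
  "add_caret (Node l r) (nleaves (Node l r) - 1) = Node l (add_caret r (nleaves r - 1))"
proof -
  have "\<not> nleaves l + nleaves r - 1 < nleaves l" "nleaves l + nleaves r - 1 - nleaves l = nleaves r - 1"
    using nleaves_pos[of r] by auto
  then show ?thesis by simp
qed

lemma contains_interior_add_caret_last:
  "contains_interior (add_caret t (nleaves t - 1)) = contains_interior t"
proof (induction t)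
  case (Node l r)
  then show ?case unfolding add_caret_Node_last by simp
qed simp

lemma gam_add_caret_last:
  "p = RootP \<or> p = RightP \<Longrightarrow> gam p (add_caret t (nleaves t - 1)) = gam p t"
proof (induction t arbitrary: p)
  case (Node l r)
  then show ?case
    unfolding add_caret_Node_last using contains_interior_add_caret_last[of r] by auto
qed auto

lemma gam_LeftP_add_caret_0: "l \<noteq> Leaf \<Longrightarrow> gam LeftP (add_caret l 0) = (X0, False) # gam LeftP l"
proof (induction l)
  case (Node l1 l2)
  then show ?case
    using nleaves_pos[of l1] add_caret_not_Leaf[of 0 l1] by (cases "l1 = Leaf") simp_all
qed simp

lemma gamma_add_caret_0: "S \<noteq> Leaf \<Longrightarrow> gamma (add_caret S 0) = (X0, False) # gamma S"
proof (cases S)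
  case (Node l r)
  then show ?thesis
    using nleaves_pos[of l] add_caret_not_Leaf[of 0 l] gam_LeftP_add_caret_0[of l]
    by (cases "l = Leaf") (simp_all add: gamma_def)
qed simp

definition x0_inv_successor :: "tree \<Rightarrow> tree \<Rightarrow> tree \<Rightarrow> tree \<Rightarrow> bool" where
  "x0_inv_successor T S T' S' \<longleftrightarrow>
     reduced_tpd T' S' \<and> tpd_fun T' S' = gmul (tpd_fun T S) (gen_elt (X0, False)) \<and>
     freered (inv_word (gamma S') @ gamma T') = freered (inv_word (gamma S) @ gamma T @ [(X0, False)])"

lemma reduced_tpd_Leaf: "reduced_tpd Leaf S \<longleftrightarrow> S = Leaf"
  by (cases S) (auto simp: reduced_tpd_def)

lemma x0_inv_successor_Leaf:
  "x0_inv_successor Leaf Leaf (Node (Node Leaf Leaf) Leaf) (Node Leaf (Node Leaf Leaf))"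
  by (simp add: x0_inv_successor_def reduced_tpd_def exposed.simps gmul_def tpd_fun_self gen_elt_def
      gamma_def)

text \<open>Rotation at the root when the domain tree has an empty right subtree: first add a caret
  at its last leaf, on both sides.\<close>
lemma x0_inv_successor_add_last_caret:
  assumes red: "reduced_tpd (Node L Leaf) S" and L: "L \<noteq> Leaf"
  shows "x0_inv_successor (Node L Leaf) S (Node (Node L Leaf) Leaf) (add_caret S (nleaves L))"
proof -
  let ?T = "Node L Leaf" and ?n = "nleaves L"
  have nS: "nleaves S = Suc ?n" using red by (simp add: reduced_tpd_def nleaves_ncarets)
  then have n: "?n < nleaves S" "nleaves (add_caret S ?n) = nleaves (Node L (Node Leaf Leaf))"
    by (simp_all add: nleaves_add_caret)
  have "tpd_fun (Node (Node L Leaf) Leaf) (add_caret S ?n)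
      = gmul (tpd_fun (Node L (Node Leaf Leaf)) (add_caret S ?n)) (gen_elt (X0, False))"
    using gmul_tpd_fun_rotation[OF _ n(2)] by simp
  also have "tpd_fun (Node L (Node Leaf Leaf)) (add_caret S ?n) = tpd_fun ?T S"
    using tpd_fun_add_caret[of ?n ?T S] nS by simp
  finally have mul: "tpd_fun (Node (Node L Leaf) Leaf) (add_caret S ?n) = gmul (tpd_fun ?T S) (gen_elt (X0, False))" .
  have "exposed (Node (Node L Leaf) Leaf) \<inter> exposed (add_caret S ?n) = {}"
  proof -
    have "i \<in> exposed S" if "i \<in> exposed L" "i \<in> exposed (add_caret S ?n)" for i
      using that exposed_bound[of i L] exposed_add_caret_other[OF n(1), of i] by auto
    then show ?thesis using red L by (auto simp: reduced_tpd_def mem_exposed_Node)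
  qed
  moreover have "gamma (add_caret S ?n) = gamma S"
    using gam_add_caret_last[of RootP S] nS by (simp add: gamma_def)
  moreover have "gamma (Node (Node L Leaf) Leaf) = gamma ?T @ [(X0, False)]"
    using L by (simp add: gamma_def)
  ultimately show ?thesis
    using mul n(2) by (simp add: x0_inv_successor_def reduced_tpd_def nleaves_ncarets)
qed

lemma exposed_rotation:
  "i \<in> exposed (Node (Node L R1) R2) \<Longrightarrow>
   i \<in> exposed (Node L (Node R1 R2)) \<or> (i = 0 \<and> L = Leaf \<and> R1 = Leaf)"
  by (cases "L = Leaf \<and> R1 = Leaf") (auto simp: mem_exposed_Node diff_diff_left)

lemma x0_inv_successor_rotation:
  assumes red: "reduced_tpd (Node L (Node R1 R2)) S" and nc: "\<not> (L = Leaf \<and> R1 = Leaf \<and> 0 \<in> exposed S)"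
  shows "x0_inv_successor (Node L (Node R1 R2)) S (Node (Node L R1) R2) S"
proof -
  let ?T = "Node L (Node R1 R2)" and ?T' = "Node (Node L R1) R2"
  have nS: "nleaves S = nleaves ?T" using red by (simp add: reduced_tpd_def nleaves_ncarets)
  have "exposed ?T' \<inter> exposed S = {}"
    using exposed_rotation[of _ L R1 R2] red nc by (auto simp: reduced_tpd_def)
  moreover have "freered (inv_word (gamma S) @ gamma ?T') =
      freered (inv_word (gamma S) @ gamma ?T @ [(X0, False)])"
  proof (cases "contains_interior R2")
    case True
    define P where "P = gam LeftP L @ (if L = Leaf then [] else [(X0, False)]) @ gam InteriorP R1"
    have "gamma ?T' = P @ [(X0, False)] @ gam RightP R2"
      "gamma ?T = P @ [(X0, False)] @ gam RightP R2 @ [(X0, True)]"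
      using True by (simp_all add: P_def gamma_def)
    then show ?thesis
      using freered_cancel_middle[of "inv_word (gamma S) @ gamma ?T'" "(X0, True)" "[]"] by simp
  next
    case False
    then show ?thesis using gam_RightP_if_not_contains_interior[OF False] by (simp add: gamma_def)
  qed
  ultimately show ?thesis
    using red gmul_tpd_fun_rotation[of "(X0, False)" ?T ?T' S] nS
    by (simp add: x0_inv_successor_def reduced_tpd_def)
qed

lemma x0_inv_successor_identity:
  assumes red: "reduced_tpd (Node Leaf (Node Leaf Leaf)) S" and "0 \<in> exposed S"
  shows "x0_inv_successor (Node Leaf (Node Leaf Leaf)) S Leaf Leaf"
proof -
  obtain S0 where S0: "0 < nleaves S0" "S = add_caret S0 0"
    using exposed_imp_add_caret[OF assms(2)] by blast
  moreover have "nleaves S = 3" using red by (simp add: reduced_tpd_def nleaves_ncarets)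
  ultimately have "nleaves S0 = 2" by (simp add: nleaves_add_caret)
  then have "S0 = Node Leaf Leaf" by (simp add: nleaves_eq_2)
  with S0 have S: "S = Node (Node Leaf Leaf) Leaf" by simp
  have "tpd_fun (Node Leaf (Node Leaf Leaf)) S \<circ> gen_elt (X0, False) = id"
    unfolding S gen_elt_def
    using tpd_fun_comp[of "Node (Node Leaf Leaf) Leaf" "Node Leaf (Node Leaf Leaf)" "Node (Node Leaf Leaf) Leaf"]
    by (simp add: tpd_fun_self)
  then show ?thesis
    by (simp add: x0_inv_successor_def reduced_tpd_def gmul_def tpd_fun_self S gamma_def)
qed

lemma freered_gamma_cancel_x0:
  assumes "S0 \<noteq> Leaf"
  shows "freered (inv_word (gamma (add_caret S0 0)) @ gamma (Node Leaf (Node Leaf R)) @ [(X0, False)])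
    = freered (inv_word (gamma S0) @ gamma (Node Leaf R))"
proof -
  have gS: "inv_word (gamma (add_caret S0 0)) = inv_word (gamma S0) @ [(X0, True)]"
    using gamma_add_caret_0[OF assms] by simp
  have gR: "gamma (Node Leaf R) = gam RightP R" by (simp add: gamma_def)
  show ?thesis
  proof (cases "contains_interior R")
    case True
    then have "gamma (Node Leaf (Node Leaf R)) = [(X0, False)] @ gam RightP R @ [(X0, True)]"
      by (simp add: gamma_def)
    then have "freered (inv_word (gamma (add_caret S0 0)) @ gamma (Node Leaf (Node Leaf R)) @ [(X0, False)])
      = freered (inv_word (gamma S0) @ (X0, True) # inv_letter (X0, True) # (gam RightP R @ [(X0, True), inv_letter (X0, True)]))"
      by (simp add: gS)
    also have "\<dots> = freered ((inv_word (gamma S0) @ gam RightP R) @ [(X0, True), inv_letter (X0, True)])"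
      by (simp only: freered_cancel_middle append_assoc)
    also have "\<dots> = freered (inv_word (gamma S0) @ gamma (Node Leaf R))"
      by (simp only: freered_cancel_last gR)
    finally show ?thesis .
  next
    case False
    then have "gamma (Node Leaf (Node Leaf R)) = []" "gamma (Node Leaf R) = []"
      using gam_RightP_if_not_contains_interior[OF False] by (simp_all add: gamma_def)
    then show ?thesis using freered_cancel_last[of "inv_word (gamma S0)" "(X0, True)"] by (simp add: gS)
  qed
qed

text \<open>The rotation creates the caret exposed at leaf 0 in both trees, which then cancels.\<close>
lemma x0_inv_successor_cancel:
  assumes red: "reduced_tpd (Node Leaf (Node Leaf R)) (add_caret S0 0)" and R: "R \<noteq> Leaf"
    and S0: "0 < nleaves S0"
  shows "x0_inv_successor (Node Leaf (Node Leaf R)) (add_caret S0 0) (Node Leaf R) S0"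
proof -
  let ?T = "Node Leaf (Node Leaf R)" and ?S = "add_caret S0 0"
  have n: "nleaves S0 = nleaves (Node Leaf R)"
    using red nleaves_add_caret[OF S0] by (simp add: reduced_tpd_def nleaves_ncarets)
  have "tpd_fun (Node Leaf R) S0 = tpd_fun (Node (Node Leaf Leaf) R) ?S"
    using tpd_fun_add_caret[of 0 "Node Leaf R" S0] n by simp
  also have "\<dots> = gmul (tpd_fun ?T ?S) (gen_elt (X0, False))"
    using gmul_tpd_fun_rotation[of "(X0, False)" ?T _ ?S] n nleaves_add_caret[OF S0] by simp
  finally have mul: "tpd_fun (Node Leaf R) S0 = gmul (tpd_fun ?T ?S) (gen_elt (X0, False))" .
  have "Suc i \<in> exposed ?T \<inter> exposed ?S" if "i \<in> exposed (Node Leaf R)" "i \<in> exposed S0" for i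
    using that R exposed_add_caret_other[OF S0, of "Suc i"] by (auto simp: mem_exposed_Node)
  then have "exposed (Node Leaf R) \<inter> exposed S0 = {}"
    using red by (auto simp: reduced_tpd_def)
  moreover have "S0 \<noteq> Leaf" using n nleaves_pos[of R] by auto
  ultimately show ?thesis
    using mul n freered_gamma_cancel_x0[of S0 R]
    by (simp add: x0_inv_successor_def reduced_tpd_def nleaves_ncarets)
qed

lemma exists_x0_inv_successor:
  assumes red: "reduced_tpd T S"
  shows "\<exists>T' S'. x0_inv_successor T S T' S'"
proof (cases T)
  case Leaf
  then show ?thesis using red x0_inv_successor_Leaf by (auto simp: reduced_tpd_Leaf)
next
  case (Node L R)
  show ?thesis
  proof (cases R)
    case Leaf
    have "L \<noteq> Leaf"
    proof
      assume "L = Leaf"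
      then have "S = Node Leaf Leaf"
        using red Node Leaf nleaves_eq_2[of S] by (simp add: reduced_tpd_def nleaves_ncarets)
      then show False using red Node Leaf \<open>L = Leaf\<close> by (simp add: reduced_tpd_def exposed.simps)
    qed
    then show ?thesis using x0_inv_successor_add_last_caret red Node Leaf by blast
  next
    case (Node R1 R2)
    consider "\<not> (L = Leaf \<and> R1 = Leaf \<and> 0 \<in> exposed S)" | "L = Leaf" "R1 = Leaf" "R2 = Leaf" "0 \<in> exposed S"
      | "L = Leaf" "R1 = Leaf" "R2 \<noteq> Leaf" "0 \<in> exposed S"
      by blast
    then show ?thesis
    proof cases
      case 1
      then show ?thesis using x0_inv_successor_rotation red \<open>T = Node L R\<close> Node by blast
    next
      case 2
      then show ?thesis using x0_inv_successor_identity red \<open>T = Node L R\<close> Node by blast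
    next
      case 3
      then obtain S0 where "0 < nleaves S0" "S = add_caret S0 0" using exposed_imp_add_caret by blast
      with 3 show ?thesis using x0_inv_successor_cancel red \<open>T = Node L R\<close> Node by blast
    qed
  qed
qed

lemma eta_gmul_x0_inv:
  assumes red: "reduced_tpd T S"
  shows "eta (gmul (tpd_fun T S) (gen_elt (X0, False))) = freered (eta (tpd_fun T S) @ [(X0, False)])"
proof -
  obtain T' S' where succ: "x0_inv_successor T S T' S'"
    using exists_x0_inv_successor[OF red] by blast
  then have "eta (gmul (tpd_fun T S) (gen_elt (X0, False))) = eta (tpd_fun T' S')"
    by (simp add: x0_inv_successor_def)
  also have "\<dots> = freered (inv_word (gamma S') @ gamma T')"
    using succ by (intro eta_tpd_fun) (simp add: x0_inv_successor_def)
  also have "\<dots> = freered (inv_word (gamma S) @ gamma T @ [(X0, False)])"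
    using succ by (simp add: x0_inv_successor_def)
  also have "\<dots> = freered (eta (tpd_fun T S) @ [(X0, False)])"
    unfolding eta_tpd_fun[OF red] freered_freered_append by simp
  finally show ?thesis .
qed

theorem lemma4p4:
  assumes "w \<in> thompsonF"
  shows "good_edge X0 w"
proof -
  obtain T S where red: "reduced_tpd T S" and w: "w = tpd_fun T S"
    using thompsonF_reduced_tpd[OF assms] .
  have "eta (gmul w (gen_elt (X0, False))) = freered (eta w @ [(X0, False)])"
    unfolding w by (rule eta_gmul_x0_inv[OF red])
  with assms show ?thesis by (rule good_edge_if_eta_snoc)
qed

end
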